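(* Let $n$ be a positive integer, $1\le k\le n$, $w\in\mathfrak S_n$, and let $R$ be a consistent subset of $\mathrm{Inv}_{k+1}(w)$ (i.e. $R\in\mathcal C_w(n,k+1)$). Then the directed graph $G_R$ is acyclic.
   Context: $\mathfrak S_n$ is the symmetric group on $[n]$. $\binom{[n]}{m}$ is the set of $m$-subsets of $[n]$ written $[x_1,\dots,x_m]$ with $x_1<\dots<x_m$; $X_i$ is $X$ with $x_i$ removed; $P(X)=\{X_1,\dots,X_m\}$. A prefix of $P(X)$ is a set $\{X_m,\dots,X_i\}$ and a suffix a set $\{X_i,\dots,X_1\}$ (the empty set counts as both). $\mathrm{Inv}_m(w)=\{[x_1,\dots,x_m]\in\binom{[n]}{m}:w^{-1}(x_1)>\dots>w^{-1}(x_m)\}$. $X\in\binom{[n]}{m}$ is an $m$-quasi-inversion of $w$ if exactly one pair $[x_a,x_b]$, $a<b$, is not in $\mathrm{Inv}_2(w)$. The quasi-inversion relations on $\mathrm{Inv}_m(w)$: whenever $X\in\binom{[n]}{m+1}$ is a quasi-inversion with $P(X)\cap\mathrm{Inv}_m(w)=\{X_i,X_{i+1}\}$, $X_i<X_{i+1}$ if $m-i$ is odd and $X_{i+1}<X_i$ if $m-i$ is even; $\mathcal P_w(n,m)$ is $\mathrm{Inv}_m(w)$ with the reflexive-transitive closure of these. $R\subseteq\mathrm{Inv}_{k+1}(w)$ is consistent if it is a lower order ideal of $\mathcal P_w(n,k+1)$ and for every $X\in\mathrm{Inv}_{k+2}(w)$, $P(X)\cap R$ is a prefix or suffix of $P(X)$.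 The directed graph $G_R$ has vertex set $\mathrm{Inv}_k(w)$ and directed edges: $X\to Y$ whenever $X<Y$ is a quasi-inversion relation on $\mathrm{Inv}_k(w)$; $X_i\to X_{i+1}$ for all $1\le i\le k$ whenever $X\in R$; and $X_{i+1}\to X_i$ for all $1\le i\le k$ whenever $X\in\mathrm{Inv}_{k+1}(w)\setminus R$. *)

theory Defs
  imports "HOL-Combinatorics.Permutations"
begin

definition subsets :: "nat \<Rightarrow> nat \<Rightarrow> nat set set" where
  "subsets n m = {X. X \<subseteq> {1..n} \<and> card X = m}"

text \<open>x_i, the i-th smallest element (1-indexed), and X_i = X with x_i removed.\<close>
definition elt :: "nat set \<Rightarrow> nat \<Rightarrow> nat" where
  "elt X i = sorted_list_of_set X ! (i - 1)"

definition del :: "nat set \<Rightarrow> nat \<Rightarrow> nat set" where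
  "del X i = X - {elt X i}"

definition Inv :: "nat \<Rightarrow> nat \<Rightarrow> (nat \<Rightarrow> nat) \<Rightarrow> nat set set" where
  "Inv n m w = {X \<in> subsets n m. \<forall>a\<in>X. \<forall>b\<in>X. a < b \<longrightarrow> inv w b < inv w a}"

definition quasi_inv :: "(nat \<Rightarrow> nat) \<Rightarrow> nat set \<Rightarrow> bool" where
  "quasi_inv w X \<longleftrightarrow> card {(a, b). a \<in> X \<and> b \<in> X \<and> a < b \<and> \<not> (inv w b < inv w a)} = 1"

text \<open>Quasi-inversion relations on Inv_m(w), as pairs (Y, Z) meaning Y < Z.\<close>
definition qrel :: "nat \<Rightarrow> nat \<Rightarrow> (nat \<Rightarrow> nat) \<Rightarrow> (nat set \<times> nat set) set" where
  "qrel n m w = {(Y, Z). \<exists>X i. X \<in> subsets n (m + 1) \<and> quasi_inv w X \<and> 1 \<le> i \<and> i \<le> m \<and>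
      {del X j | j. 1 \<le> j \<and> j \<le> m + 1} \<inter> Inv n m w = {del X i, del X (i + 1)} \<and>
      (if odd (m - i) then (Y, Z) = (del X i, del X (i + 1)) else (Y, Z) = (del X (i + 1), del X i))}"

definition Pleq :: "nat \<Rightarrow> nat \<Rightarrow> (nat \<Rightarrow> nat) \<Rightarrow> nat set \<Rightarrow> nat set \<Rightarrow> bool" where
  "Pleq n m w Y Z \<longleftrightarrow> Y \<in> Inv n m w \<and> Z \<in> Inv n m w \<and> (Y, Z) \<in> (qrel n m w)\<^sup>*"

definition is_prefix :: "nat set \<Rightarrow> nat set set \<Rightarrow> bool" where
  "is_prefix X S \<longleftrightarrow> (\<exists>i. 1 \<le> i \<and> i \<le> card X + 1 \<and> S = {del X j | j. i \<le> j \<and> j \<le> card X})"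

definition is_suffix :: "nat set \<Rightarrow> nat set set \<Rightarrow> bool" where
  "is_suffix X S \<longleftrightarrow> (\<exists>i. i \<le> card X \<and> S = {del X j | j. 1 \<le> j \<and> j \<le> i})"

definition Pset :: "nat set \<Rightarrow> nat set set" where
  "Pset X = {del X j | j. 1 \<le> j \<and> j \<le> card X}"

definition consistent :: "nat \<Rightarrow> nat \<Rightarrow> (nat \<Rightarrow> nat) \<Rightarrow> nat set set \<Rightarrow> bool" where
  "consistent n k w R \<longleftrightarrow>
     R \<subseteq> Inv n (k + 1) w \<and>
     (\<forall>Y Z. Pleq n (k + 1) w Y Z \<and> Z \<in> R \<longrightarrow> Y \<in> R) \<and>
     (\<forall>X \<in> Inv n (k + 2) w. is_prefix X (Pset X \<inter> R) \<or> is_suffix X (Pset X \<inter> R))"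

definition GR_edges :: "nat \<Rightarrow> nat \<Rightarrow> (nat \<Rightarrow> nat) \<Rightarrow> nat set set \<Rightarrow> (nat set \<times> nat set) set" where
  "GR_edges n k w R =
     {(Y, Z). Pleq n k w Y Z \<and> (Y, Z) \<in> qrel n k w}
     \<union> {(del X i, del X (i + 1)) | X i. X \<in> R \<and> 1 \<le> i \<and> i \<le> k}
     \<union> {(del X (i + 1), del X i) | X i. X \<in> Inv n (k + 1) w - R \<and> 1 \<le> i \<and> i \<le> k}"

end

theory Submission
  imports Defs
begin

(*
  Replace [n] and w^-1 by an arbitrary finite vertex set V and an arbitrary map p, and induct on
  the size of V. Let v = min V. Every edge of G_R goes from a layer to the same or a later one,
  the layers being: the "early" vertices avoiding v, the vertices containing v, and the remaining
  vertices avoiding v. Deleting v maps the middle layer into the graph of the consistent set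
  {T. T u {v} in R} on the link {t > v. p t < p v} of v, with k - 1 in place of k; the outer
  layers lie in the graph of the consistent set {X in R. v notin X} on V - {v}. All of these are
  acyclic by induction, hence so is G_R.
*)

section \<open>Facets of finite sets of natural numbers\<close>

lemma elt_mem: "finite X \<Longrightarrow> 1 \<le> i \<Longrightarrow> i \<le> card X \<Longrightarrow> elt X i \<in> X"
  unfolding elt_def using nth_mem[of "i - 1" "sorted_list_of_set X"] by simp

lemma elt_less: "finite X \<Longrightarrow> 1 \<le> i \<Longrightarrow> i < j \<Longrightarrow> j \<le> card X \<Longrightarrow> elt X i < elt X j"
  unfolding elt_def by (rule sorted_wrt_nth_less[where P = "(<)"]) auto

lemma elt_eq_iff:
  "finite X \<Longrightarrow> 1 \<le> i \<Longrightarrow> i \<le> card X \<Longrightarrow> 1 \<le> j \<Longrightarrow> j \<le> card X \<Longrightarrow> elt X i = elt X j \<longleftrightarrow> i = j"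
  by (metis elt_less less_irrefl linorder_neqE_nat)

lemma del_subset: "del X i \<subseteq> X"
  by (auto simp: del_def)

lemma elt_mem_del:
  "finite X \<Longrightarrow> 1 \<le> i \<Longrightarrow> i \<le> card X \<Longrightarrow> 1 \<le> j \<Longrightarrow> j \<le> card X \<Longrightarrow> elt X j \<in> del X i \<longleftrightarrow> j \<noteq> i"
  by (auto simp: del_def elt_mem elt_eq_iff)

lemma elt_1_in_del:
  assumes "finite X" "1 < j" "j \<le> card X"
  shows "elt X 1 \<in> del X j" "elt X 1 < elt X j"
  using elt_mem_del[OF assms(1), of j 1] elt_less[OF assms(1), of 1 j] assms by auto

lemma card_del: "finite X \<Longrightarrow> 1 \<le> i \<Longrightarrow> i \<le> card X \<Longrightarrow> card (del X i) = card X - 1"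
  by (simp add: del_def elt_mem)

lemma del_inj:
  "finite X \<Longrightarrow> 1 \<le> i \<Longrightarrow> i \<le> card X \<Longrightarrow> 1 \<le> j \<Longrightarrow> j \<le> card X \<Longrightarrow> del X i = del X j \<Longrightarrow> i = j"
  by (metis elt_mem_del)

lemma inj_on_del: "finite X \<Longrightarrow> inj_on (del X) {1..card X}"
  by (rule inj_onI) (auto dest: del_inj)

lemma facets_eq_image: "{del X j | j. a \<le> j \<and> j \<le> b} = del X ` {a..b}"
  by auto

lemma del_Un_del_Suc: "finite X \<Longrightarrow> 1 \<le> i \<Longrightarrow> i < card X \<Longrightarrow> del X i \<union> del X (i + 1) = X"
  unfolding del_def using elt_less[of X i "i + 1"] by auto

lemma card_Suc_finite: "card X = Suc m \<Longrightarrow> finite X"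
  by (metis card.infinite Zero_not_Suc)

lemma facets_Un:
  assumes "card X = k + 1" "1 \<le> i" "i \<le> k"
    and "Y = del X i \<and> Z = del X (i + 1) \<or> Y = del X (i + 1) \<and> Z = del X i"
  shows "Y \<union> Z = X"
proof -
  have "del X i \<union> del X (i + 1) = X"
    using assms(1-3) card_Suc_finite[of X k] by (intro del_Un_del_Suc) auto
  then show ?thesis using assms(4) by auto
qed

lemma sorted_list_of_set_insert_min:
  assumes "finite X" "\<forall>x\<in>X. v < x"
  shows "sorted_list_of_set (insert v X) = v # sorted_list_of_set X"
proof -
  have "Min (insert v X) = v" "insert v X - {v} = X"
    using assms by (auto simp: Min_insert2 less_imp_le)
  then show ?thesis
    using sorted_list_of_set_nonempty[of "insert v X"] assms(1) by simp
qed

lemma elt_insert_min: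
  assumes "finite X" "\<forall>x\<in>X. v < x"
  shows "elt (insert v X) 1 = v" "1 \<le> j \<Longrightarrow> elt (insert v X) (j + 1) = elt X j"
  using sorted_list_of_set_insert_min[OF assms] by (auto simp: elt_def nth_Cons')

lemma del_insert_min:
  assumes "finite X" "\<forall>x\<in>X. v < x"
  shows "del (insert v X) 1 = X"
    and "1 \<le> j \<Longrightarrow> j \<le> card X \<Longrightarrow> del (insert v X) (j + 1) = insert v (del X j)"
  using assms elt_insert_min[OF assms] elt_mem[OF assms(1), of j] by (auto simp: del_def)

lemma elt_1_eq_least:
  assumes "finite X" "v \<in> X" "\<forall>x\<in>X. v \<le> x"
  shows "elt X 1 = v"
proof -
  have "insert v (X - {v}) = X" using assms(2) by blast
  then show ?thesis
    using elt_insert_min(1)[of "X - {v}" v] assms by force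
qed

lemma least_in_del_iff:
  assumes "finite X" "v \<in> X" "\<forall>x\<in>X. v \<le> x" "1 \<le> j" "j \<le> card X"
  shows "v \<in> del X j \<longleftrightarrow> j \<noteq> 1"
  using elt_mem_del[OF assms(1,4,5), of 1] elt_1_eq_least[OF assms(1-3)] assms(4,5) by auto

section \<open>Inversions, quasi-inversions and consistency on an arbitrary vertex set\<close>

(* p plays the role of w^-1. *)
abbreviation inverted :: "(nat \<Rightarrow> nat) \<Rightarrow> nat set \<Rightarrow> bool" where
  "inverted p X \<equiv> \<forall>a\<in>X. \<forall>b\<in>X. a < b \<longrightarrow> p b < p a"

definition Inv_on :: "nat set \<Rightarrow> nat \<Rightarrow> (nat \<Rightarrow> nat) \<Rightarrow> nat set set" where
  "Inv_on V m p = {X. X \<subseteq> V \<and> card X = m \<and> inverted p X}"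

definition quasi_at :: "(nat \<Rightarrow> nat) \<Rightarrow> nat set \<Rightarrow> nat \<Rightarrow> bool" where
  "quasi_at p X i \<longleftrightarrow>
     inverted p (del X i) \<and> inverted p (del X (i + 1)) \<and> \<not> p (elt X (i + 1)) < p (elt X i)"

definition quasi_edge :: "nat \<Rightarrow> nat set \<Rightarrow> nat \<Rightarrow> nat set \<times> nat set" where
  "quasi_edge m X i = (if odd (m - i) then (del X i, del X (i + 1)) else (del X (i + 1), del X i))"

(* Instead of the condition on the facets of X that lie in Inv_m, the unique non-inverted pair
   of X is required to be (x_i, x_(i+1)); the two agree by quasi_at_iff. *)
definition qrel_on :: "nat set \<Rightarrow> nat \<Rightarrow> (nat \<Rightarrow> nat) \<Rightarrow> (nat set \<times> nat set) set" where
  "qrel_on V m p =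
     {quasi_edge m X i | X i. X \<subseteq> V \<and> card X = m + 1 \<and> 1 \<le> i \<and> i \<le> m \<and> quasi_at p X i}"

(* The lower-ideal condition is imposed on generating relations only, and "P(X) inter R is a
   prefix or a suffix" becomes monotonicity of j |-> (X_j in R). *)
definition consistent_on :: "nat set \<Rightarrow> nat \<Rightarrow> (nat \<Rightarrow> nat) \<Rightarrow> nat set set \<Rightarrow> bool" where
  "consistent_on V k p R \<longleftrightarrow>
     R \<subseteq> Inv_on V (k + 1) p \<and>
     (\<forall>(Y, Z) \<in> qrel_on V (k + 1) p. Z \<in> R \<longrightarrow> Y \<in> R) \<and>
     (\<forall>X \<in> Inv_on V (k + 2) p.
        mono_on {1..k + 2} (\<lambda>j. del X j \<in> R) \<or> antimono_on {1..k + 2} (\<lambda>j. del X j \<in> R))"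

definition GR_edges_on ::
    "nat set \<Rightarrow> nat \<Rightarrow> (nat \<Rightarrow> nat) \<Rightarrow> nat set set \<Rightarrow> (nat set \<times> nat set) set" where
  "GR_edges_on V k p R =
     qrel_on V k p
     \<union> {(del X i, del X (i + 1)) | X i. X \<in> R \<and> 1 \<le> i \<and> i \<le> k}
     \<union> {(del X (i + 1), del X i) | X i. X \<in> Inv_on V (k + 1) p - R \<and> 1 \<le> i \<and> i \<le> k}"

lemma facets_inverted_pairs:
  assumes "finite X" "1 \<le> i" "i < card X" "inverted p (del X i)" "inverted p (del X (i + 1))"
    and "a \<in> X" "b \<in> X" "a < b" "(a, b) \<noteq> (elt X i, elt X (i + 1))"
  shows "p b < p a"
proof (cases "a = elt X i \<or> b = elt X i")
  case True
  moreover have "elt X i < elt X (i + 1)" using assms(1-3) by (simp add: elt_less)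
  ultimately have "a \<in> del X (i + 1)" "b \<in> del X (i + 1)"
    using assms(6-9) by (auto simp: del_def)
  then show ?thesis using assms(5,8) by blast
next
  case False
  then have "a \<in> del X i" "b \<in> del X i" using assms(6,7) by (auto simp: del_def)
  then show ?thesis using assms(4,8) by blast
qed

lemma quasi_at_not_inverted:
  assumes "quasi_at p X i" "finite X" "1 \<le> i" "i < card X"
  shows "\<not> inverted p X"
  using assms elt_mem[of X i] elt_mem[of X "i + 1"] elt_less[of X i "i + 1"]
  by (auto simp: quasi_at_def)

lemma quasi_edge_cases:
  "quasi_edge m X i = (Y, Z) \<Longrightarrow> Y = del X i \<and> Z = del X (i + 1) \<or> Y = del X (i + 1) \<and> Z = del X i"
  by (auto simp: quasi_edge_def split: if_splits)

lemma qrel_on_Inv_on: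
  assumes "(Y, Z) \<in> qrel_on V m p"
  shows "Y \<in> Inv_on V m p" "Z \<in> Inv_on V m p"
proof -
  obtain X i where X: "(Y, Z) = quasi_edge m X i" "X \<subseteq> V" "card X = m + 1" "1 \<le> i" "i \<le> m"
    "quasi_at p X i"
    using assms by (auto simp: qrel_on_def)
  have "finite X" using X(3) card_Suc_finite by simp
  then have "del X j \<in> Inv_on V m p" if "j = i \<or> j = i + 1" "inverted p (del X j)" for j
    using that X(2-5) del_subset[of X j] card_del[of X j] by (auto simp: Inv_on_def)
  then show "Y \<in> Inv_on V m p" "Z \<in> Inv_on V m p"
    using quasi_edge_cases[OF X(1)[symmetric]] X(6) by (auto simp: quasi_at_def)
qed

lemma inverted_insert_min:
  "\<forall>y\<in>Y. v < y \<Longrightarrow> inverted p (insert v Y) \<longleftrightarrow> inverted p Y \<and> (\<forall>y\<in>Y. p y < p v)"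
  by auto

lemma quasi_at_insert_min:
  assumes "finite X" "\<forall>x\<in>X. v < x \<and> p x < p v" "1 \<le> i" "i < card X"
  shows "quasi_at p (insert v X) (i + 1) \<longleftrightarrow> quasi_at p X i"
proof -
  have min: "\<forall>x\<in>X. v < x" using assms(2) by blast
  have "inverted p (insert v S) \<longleftrightarrow> inverted p S" if "S \<subseteq> X" for S
    using that assms(2) by (subst inverted_insert_min) auto
  then show ?thesis
    using assms del_insert_min(2)[OF assms(1) min, of i]
      del_insert_min(2)[OF assms(1) min, of "i + 1"]
      elt_insert_min(2)[OF assms(1) min, of i] elt_insert_min(2)[OF assms(1) min, of "i + 1"]
      del_subset[of X i] del_subset[of X "i + 1"]
    by (simp add: quasi_at_def)
qed

lemma quasi_edge_insert_min:
  assumes "finite X" "\<forall>x\<in>X. v < x" "1 \<le> i" "i < card X"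
  shows
    "quasi_edge (m + 1) (insert v X) (i + 1) = map_prod (insert v) (insert v) (quasi_edge m X i)"
  using assms del_insert_min(2)[OF assms(1,2), of i] del_insert_min(2)[OF assms(1,2), of "i + 1"]
  by (simp add: quasi_edge_def)

lemma qrel_on_insert_min:
  assumes "X \<subseteq> V" "v \<in> V" "card X = m + 1" "1 \<le> i" "i \<le> m" "quasi_at p X i"
    and "\<forall>x\<in>X. v < x \<and> p x < p v"
  shows "map_prod (insert v) (insert v) (quasi_edge m X i) \<in> qrel_on V (m + 1) p"
proof -
  have fin: "finite X" using assms(3) card_Suc_finite by simp
  have min: "\<forall>x\<in>X. v < x" using assms(7) by blast
  have "insert v X \<subseteq> V" "card (insert v X) = m + 1 + 1"
    using assms(1-3) fin min by auto
  moreover have "quasi_at p (insert v X) (i + 1)"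
    using quasi_at_insert_min[OF fin assms(7) assms(4)] assms(3,5,6) by simp
  ultimately have "quasi_edge (m + 1) (insert v X) (i + 1) \<in> qrel_on V (m + 1) p"
    using assms(4,5) unfolding qrel_on_def by force
  then show ?thesis
    using quasi_edge_insert_min[OF fin min assms(4)] assms(3,5) by simp
qed

lemma qrel_on_insert_min_1:
  assumes "X \<in> Inv_on V (k + 1) p" "v \<in> V" "\<forall>x\<in>X. v < x"
    and "\<forall>x\<in>del X 1. p x < p v" "\<not> p (elt X 1) < p v"
  shows "(if odd k then (X, insert v (del X 1)) else (insert v (del X 1), X)) \<in> qrel_on V (k + 1) p"
proof -
  have X: "X \<subseteq> V" "card X = k + 1" "inverted p X" and fin: "finite X"
    using assms(1) card_Suc_finite[of X k] by (auto simp: Inv_on_def)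
  have del_2: "del (insert v X) (1 + 1) = insert v (del X 1)"
    using del_insert_min(2)[OF fin assms(3), of 1] X(2) by simp
  have "quasi_at p (insert v X) 1"
    unfolding quasi_at_def del_2
    using del_insert_min(1)[OF fin assms(3)] elt_insert_min(1)[OF fin assms(3)]
      elt_insert_min(2)[OF fin assms(3), of 1] X(3) assms(3-5) del_subset[of X 1]
    by (subst inverted_insert_min) (auto, blast)
  moreover have "insert v X \<subseteq> V" "card (insert v X) = k + 1 + 1"
    using X assms(2,3) fin by auto
  ultimately have "quasi_edge (k + 1) (insert v X) 1 \<in> qrel_on V (k + 1) p"
    unfolding qrel_on_def by force
  then show ?thesis
    unfolding quasi_edge_def del_2 del_insert_min(1)[OF fin assms(3)] by simp
qed

lemma inverted_facet_bound:
  assumes "finite X" "inverted p X" "1 \<le> i" "i < card X" "\<forall>y\<in>del X (i + 1). p y < t"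
  shows "\<forall>x\<in>X. p x < t"
proof
  fix x assume "x \<in> X"
  have "elt X i \<in> del X (i + 1)" "elt X i < elt X (i + 1)" "elt X i \<in> X" "elt X (i + 1) \<in> X"
    using assms(1,3,4) elt_mem_del[of X "i + 1" i] elt_less[of X i "i + 1"] elt_mem[of X]
    by auto
  then have "p (elt X i) < t" "p (elt X (i + 1)) < p (elt X i)" using assms(2,5) by blast+
  then have "p (elt X (i + 1)) < t" by simp
  then show "p x < t" using \<open>x \<in> X\<close> assms(5) by (cases "x = elt X (i + 1)") (auto simp: del_def)
qed

lemma quasi_at_facet_bound:
  assumes "finite X" "quasi_at p X i" "1 \<le> i" "i < card X" "\<forall>y\<in>del X i. p y < t"
  shows "\<forall>x\<in>X. p x < t"
proof
  fix x assume "x \<in> X"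
  have "elt X (i + 1) \<in> del X i"
    using assms(1,3,4) elt_mem_del[of X i "i + 1"] by auto
  then have "p (elt X (i + 1)) < t" using assms(5) by blast
  then have "p (elt X i) < t" using assms(2) by (simp add: quasi_at_def)
  then show "p x < t" using \<open>x \<in> X\<close> assms(5) by (cases "x = elt X i") (auto simp: del_def)
qed

lemma inverted_facet_bound_1:
  assumes "finite X" "inverted p X" "1 \<le> i" "i \<le> card X" "\<forall>y\<in>del X i. p y < t"
    and "\<not> p (elt X i) < t"
  shows "i = 1"
proof (rule ccontr)
  assume "i \<noteq> 1"
  then have "elt X 1 \<in> del X i" "elt X 1 < elt X i"
    using elt_1_in_del[OF assms(1), of i] assms(3,4) by simp_all
  moreover have "elt X 1 \<in> X" "elt X i \<in> X"
    using assms(1,3,4) elt_mem[of X 1] elt_mem[of X i] by simp_all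
  ultimately have "p (elt X 1) < t" "p (elt X i) < p (elt X 1)" using assms(2,5) by blast+
  then show False using assms(6) by simp
qed

lemma quasi_at_facet_bound_1:
  assumes "finite X" "quasi_at p X i" "1 \<le> i" "i < card X" "\<forall>y\<in>del X (i + 1). p y < t"
    and "\<not> p (elt X (i + 1)) < t"
  shows "i = 1"
proof (rule ccontr)
  assume "i \<noteq> 1"
  then have "elt X 1 \<in> del X (i + 1)" "elt X 1 < elt X i" "elt X i < elt X (i + 1)"
    using elt_1_in_del[OF assms(1), of "i + 1"] elt_less[OF assms(1), of 1 i]
      elt_less[OF assms(1), of i "i + 1"]
      assms(3,4) by simp_all
  moreover have "elt X 1 \<in> X" "elt X (i + 1) \<in> X"
    using assms(1,3,4) elt_mem[of X 1] elt_mem[of X "i + 1"] by simp_all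
  ultimately have "p (elt X 1) < t" "p (elt X (i + 1)) < p (elt X 1)"
    using facets_inverted_pairs[OF assms(1,3,4), of p "elt X 1" "elt X (i + 1)"] assms(2,5)
    by (auto simp: quasi_at_def)
  then show False using assms(6) by simp
qed

lemma mono_or_antimono_on_shift:
  fixes f g :: "nat \<Rightarrow> bool"
  assumes "mono_on {1..m + 1} f \<or> antimono_on {1..m + 1} f"
    and "\<And>j. j \<in> {1..m} \<Longrightarrow> g j \<longleftrightarrow> f (j + 1)"
  shows "mono_on {1..m} g \<or> antimono_on {1..m} g"
  using assms(1)
proof
  assume f: "mono_on {1..m + 1} f"
  have "mono_on {1..m} g"
  proof (rule monotone_onI)
    fix i j assume "i \<in> {1..m}" "j \<in> {1..m}" "i \<le> j"
    then show "g i \<le> g j" using monotone_onD[OF f, of "i + 1" "j + 1"] assms(2) by simp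
  qed
  then show ?thesis ..
next
  assume f: "antimono_on {1..m + 1} f"
  have "antimono_on {1..m} g"
  proof (rule monotone_onI)
    fix i j assume "i \<in> {1..m}" "j \<in> {1..m}" "i \<le> j"
    then show "g j \<le> g i" using monotone_onD[OF f, of "i + 1" "j + 1"] assms(2) by simp
  qed
  then show ?thesis ..
qed

lemma consistent_on_facet_step:
  assumes "consistent_on V k p R" "X \<in> Inv_on V (k + 2) p" "1 \<le> j" "j < k + 2"
  shows "del X 1 \<in> R \<Longrightarrow> del X (j + 1) \<in> R \<Longrightarrow> del X j \<in> R"
    and "del X 1 \<notin> R \<Longrightarrow> del X j \<in> R \<Longrightarrow> del X (j + 1) \<in> R"
proof -
  let ?f = "\<lambda>j. del X j \<in> R"
  have "mono_on {1..k + 2} ?f \<or> antimono_on {1..k + 2} ?f"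
    using assms(1,2) by (simp add: consistent_on_def)
  then have "(?f 1 \<longrightarrow> ?f j) \<and> (?f j \<longrightarrow> ?f (j + 1)) \<or> (?f (j + 1) \<longrightarrow> ?f j) \<and> (?f j \<longrightarrow> ?f 1)"
  proof
    assume m: "mono_on {1..k + 2} ?f"
    have "?f 1 \<le> ?f j" "?f j \<le> ?f (j + 1)"
      using monotone_onD[OF m, of 1 j] monotone_onD[OF m, of j "j + 1"] assms(3,4) by simp_all
    then show ?thesis by (blast dest: le_boolD)
  next
    assume m: "antimono_on {1..k + 2} ?f"
    have "?f j \<le> ?f 1" "?f (j + 1) \<le> ?f j"
      using monotone_onD[OF m, of 1 j] monotone_onD[OF m, of j "j + 1"] assms(3,4) by simp_all
    then show ?thesis by (blast dest: le_boolD)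
  qed
  then show "?f 1 \<Longrightarrow> ?f (j + 1) \<Longrightarrow> ?f j" and "\<not> ?f 1 \<Longrightarrow> ?f j \<Longrightarrow> ?f (j + 1)"
    by blast+
qed

lemma GR_edges_onE:
  assumes "(Y, Z) \<in> GR_edges_on V k p R"
  obtains (in_R) X i where "X \<in> R" "1 \<le> i" "i \<le> k" "Y = del X i" "Z = del X (i + 1)"
  | (not_in_R) X i where "X \<in> Inv_on V (k + 1) p" "X \<notin> R" "1 \<le> i" "i \<le> k"
      "Y = del X (i + 1)" "Z = del X i"
  | (quasi) X i where "X \<subseteq> V" "card X = k + 1" "1 \<le> i" "i \<le> k" "quasi_at p X i"
      "(Y, Z) = quasi_edge k X i"
  using assms unfolding GR_edges_on_def qrel_on_def by blast

lemma Inv_on_Diff: "Inv_on (V - {v}) m p = {X \<in> Inv_on V m p. v \<notin> X}"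
  by (auto simp: Inv_on_def)

lemma qrel_on_mono: "W \<subseteq> V \<Longrightarrow> qrel_on W m p \<subseteq> qrel_on V m p"
  unfolding qrel_on_def by blast

lemma consistent_on_remove:
  assumes "consistent_on V k p R"
  shows "consistent_on (V - {v}) k p {X \<in> R. v \<notin> X}"
  unfolding consistent_on_def
proof (intro conjI ballI)
  show "{X \<in> R. v \<notin> X} \<subseteq> Inv_on (V - {v}) (k + 1) p"
    using assms by (auto simp: consistent_on_def Inv_on_Diff)
next
  fix YZ assume YZ: "YZ \<in> qrel_on (V - {v}) (k + 1) p"
  obtain Y Z where YZ_eq: "YZ = (Y, Z)" by fastforce
  have "v \<notin> Y" using qrel_on_Inv_on(1)[OF YZ[unfolded YZ_eq]] by (simp add: Inv_on_Diff)
  moreover have "(Y, Z) \<in> qrel_on V (k + 1) p" using YZ qrel_on_mono[of "V - {v}" V] YZ_eq by blast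
  ultimately show "case YZ of (Y, Z) \<Rightarrow> Z \<in> {X \<in> R. v \<notin> X} \<longrightarrow> Y \<in> {X \<in> R. v \<notin> X}"
    using assms unfolding YZ_eq consistent_on_def by blast
next
  fix X assume X: "X \<in> Inv_on (V - {v}) (k + 2) p"
  then have "del X j \<in> {X \<in> R. v \<notin> X} \<longleftrightarrow> del X j \<in> R" for j
    using del_subset[of X j] by (auto simp: Inv_on_Diff)
  moreover have "mono_on {1..k + 2} (\<lambda>j. del X j \<in> R) \<or> antimono_on {1..k + 2} (\<lambda>j. del X j \<in> R)"
    using assms X by (simp add: consistent_on_def Inv_on_Diff)
  ultimately show "mono_on {1..k + 2} (\<lambda>j. del X j \<in> {X \<in> R. v \<notin> X}) \<or>
      antimono_on {1..k + 2} (\<lambda>j. del X j \<in> {X \<in> R. v \<notin> X})"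
    by simp
qed

lemma GR_edges_on_remove:
  assumes "(Y, Z) \<in> GR_edges_on V k p R" "R \<subseteq> Inv_on V (k + 1) p" "v \<notin> Y" "v \<notin> Z"
  shows "(Y, Z) \<in> GR_edges_on (V - {v}) k p {X \<in> R. v \<notin> X}"
  using assms(1)
proof (cases rule: GR_edges_onE)
  case (in_R X i)
  then have "Y \<union> Z = X"
    using assms(2) by (intro facets_Un[of X k i]) (auto simp: Inv_on_def)
  then show ?thesis using in_R assms(3,4) unfolding GR_edges_on_def by blast
next
  case (not_in_R X i)
  then have "Y \<union> Z = X"
    by (intro facets_Un[of X k i]) (auto simp: Inv_on_def)
  then have "X \<in> Inv_on (V - {v}) (k + 1) p - {X \<in> R. v \<notin> X}"
    using not_in_R assms(3,4) by (auto simp: Inv_on_Diff)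
  then show ?thesis using not_in_R unfolding GR_edges_on_def by blast
next
  case (quasi X i)
  then have "Y \<union> Z = X"
    using quasi_edge_cases[OF quasi(6)[symmetric]] by (intro facets_Un[of X k i]) auto
  then have "X \<subseteq> V - {v}" using quasi(1) assms(3,4) by blast
  then show ?thesis using quasi unfolding GR_edges_on_def qrel_on_def by blast
qed

lemma GR_edges_on_trivial:
  assumes "k = 0 \<or> V = {}" "R \<subseteq> Inv_on V (k + 1) p"
  shows "GR_edges_on V k p R = {}"
proof -
  have "R = {}" "Inv_on V (k + 1) p = {}" "qrel_on V k p = {}" if "V = {}"
    using assms(2) that by (auto simp: Inv_on_def qrel_on_def)
  then show ?thesis using assms(1) by (auto simp: GR_edges_on_def qrel_on_def)
qed

section \<open>Agreement with the definitions of the paper\<close>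

lemma quasi_at_if_unique_bad_pair:
  assumes "finite X" "1 \<le> i" "i < card X"
    and "card {(a, b). a \<in> X \<and> b \<in> X \<and> a < b \<and> \<not> p b < p a} = 1" (is "card ?bad = 1")
    and "inverted p (del X i)" "inverted p (del X (i + 1))"
  shows "quasi_at p X i"
proof -
  have "\<not> p (elt X (i + 1)) < p (elt X i)"
  proof
    assume "p (elt X (i + 1)) < p (elt X i)"
    then have "?bad = {}" using facets_inverted_pairs[OF assms(1-3,5,6)] by auto
    then show False using assms(4) by (metis card.empty zero_neq_one)
  qed
  then show ?thesis using assms(5,6) by (simp add: quasi_at_def)
qed

lemma quasi_at_facets_Inv_on:
  assumes "X \<subseteq> V" "card X = m + 1" "1 \<le> i" "i \<le> m" "quasi_at p X i"
  shows "{del X j | j. 1 \<le> j \<and> j \<le> m + 1} \<inter> Inv_on V m p = {del X i, del X (i + 1)}"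
    (is "?facets = ?pair")
proof -
  have X: "finite X" "i < card X" using assms(2,4) card_Suc_finite by auto
  show ?thesis
  proof (intro equalityI subsetI)
    fix F assume "F \<in> ?facets"
    then obtain j where j: "1 \<le> j" "j \<le> card X" "F = del X j" "inverted p (del X j)"
      using assms(2) by (auto simp: Inv_on_def)
    show "F \<in> ?pair"
    proof (rule ccontr)
      assume "F \<notin> ?pair"
      then have "elt X i \<in> del X j" "elt X (i + 1) \<in> del X j"
        using j X assms(3) elt_mem_del by auto
      then show False
        using j(4) assms(3,5) X elt_less[of X i "i + 1"] by (auto simp: quasi_at_def)
    qed
  next
    fix F assume "F \<in> ?pair"
    then show "F \<in> ?facets"
      using assms X card_del[of X] order_trans[OF del_subset assms(1)]
      by (auto simp: Inv_on_def quasi_at_def) blast+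
  qed
qed

lemma quasi_at_iff:
  assumes "X \<subseteq> V" "card X = m + 1" "1 \<le> i" "i \<le> m"
  shows "card {(a, b). a \<in> X \<and> b \<in> X \<and> a < b \<and> \<not> p b < p a} = 1 \<and>
         {del X j | j. 1 \<le> j \<and> j \<le> m + 1} \<inter> Inv_on V m p = {del X i, del X (i + 1)}
     \<longleftrightarrow> quasi_at p X i" (is "card ?bad = 1 \<and> ?facets = ?pair \<longleftrightarrow> _")
proof -
  have X: "finite X" "1 \<le> i" "i < card X" using assms card_Suc_finite by auto
  show ?thesis
  proof
    assume h: "card ?bad = 1 \<and> ?facets = ?pair"
    then have "del X i \<in> Inv_on V m p" "del X (i + 1) \<in> Inv_on V m p" by blast+
    then show "quasi_at p X i" using quasi_at_if_unique_bad_pair[OF X] h by (simp add: Inv_on_def)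
  next
    assume q: "quasi_at p X i"
    then have "?bad = {(elt X i, elt X (i + 1))}"
      using facets_inverted_pairs[OF X, of p] X elt_mem[of X i] elt_mem[of X "i + 1"]
        elt_less[of X i "i + 1"]
      by (auto simp: quasi_at_def)
    then show "card ?bad = 1 \<and> ?facets = ?pair" using quasi_at_facets_Inv_on[OF assms q] by simp
  qed
qed

lemma Inv_eq_Inv_on: "Inv n m w = Inv_on {1..n} m (inv w)"
  by (auto simp: Inv_def Inv_on_def subsets_def)

lemma qrel_eq_qrel_on: "qrel n m w = qrel_on {1..n} m (inv w)"
proof -
  have iff: "quasi_inv w X \<and> {del X j | j. 1 \<le> j \<and> j \<le> m + 1} \<inter> Inv n m w = {del X i, del X (i + 1)}
      \<longleftrightarrow> quasi_at (inv w) X i" if "X \<subseteq> {1..n}" "card X = m + 1" "1 \<le> i" "i \<le> m" for X i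
    using quasi_at_iff[OF that] by (simp add: quasi_inv_def Inv_eq_Inv_on)
  have edge: "(if odd (m - i) then YZ = (del X i, del X (i + 1)) else YZ = (del X (i + 1), del X i))
      \<longleftrightarrow> YZ = quasi_edge m X i" for X i YZ
    by (simp add: quasi_edge_def)
  show ?thesis
  proof (intro set_eqI iffI)
    fix YZ assume "YZ \<in> qrel n m w"
    then obtain X i where "X \<subseteq> {1..n}" "card X = m + 1" "1 \<le> i" "i \<le> m" "quasi_inv w X"
        "{del X j | j. 1 \<le> j \<and> j \<le> m + 1} \<inter> Inv n m w = {del X i, del X (i + 1)}"
        "YZ = quasi_edge m X i"
      unfolding qrel_def subsets_def edge by auto
    then show "YZ \<in> qrel_on {1..n} m (inv w)" using iff unfolding qrel_on_def by blast
  next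
    fix YZ assume "YZ \<in> qrel_on {1..n} m (inv w)"
    then obtain X i where "X \<subseteq> {1..n}" "card X = m + 1" "1 \<le> i" "i \<le> m" "quasi_at (inv w) X i"
        "YZ = quasi_edge m X i"
      unfolding qrel_on_def by auto
    moreover from this have "quasi_inv w X"
      "{del X j | j. 1 \<le> j \<and> j \<le> m + 1} \<inter> Inv n m w = {del X i, del X (i + 1)}"
      using iff by blast+
    ultimately show "YZ \<in> qrel n m w" unfolding qrel_def subsets_def edge by blast
  qed
qed

lemma facet_in_prefix_iff:
  assumes "finite X" "is_prefix X (Pset X \<inter> R)"
  obtains s where "\<And>j. j \<in> {1..card X} \<Longrightarrow> del X j \<in> R \<longleftrightarrow> s \<le> j"
proof -
  obtain s where s: "1 \<le> s" "Pset X \<inter> R = del X ` {s..card X}"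
    using assms(2) unfolding is_prefix_def facets_eq_image by blast
  have "del X j \<in> R \<longleftrightarrow> s \<le> j" if j: "j \<in> {1..card X}" for j
  proof -
    have "del X j \<in> R \<longleftrightarrow> del X j \<in> Pset X \<inter> R"
      using j unfolding Pset_def facets_eq_image by blast
    also have "\<dots> \<longleftrightarrow> j \<in> {s..card X}"
      unfolding s(2) using inj_on_image_mem_iff[OF inj_on_del[OF assms(1)] j] s(1) by simp
    finally show ?thesis using j by simp
  qed
  then show ?thesis using that by blast
qed

lemma facet_in_suffix_iff:
  assumes "finite X" "is_suffix X (Pset X \<inter> R)"
  obtains s where "\<And>j. j \<in> {1..card X} \<Longrightarrow> del X j \<in> R \<longleftrightarrow> j \<le> s"
proof -
  obtain s where s: "s \<le> card X" "Pset X \<inter> R = del X ` {1..s}"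
    using assms(2) unfolding is_suffix_def facets_eq_image by blast
  have "del X j \<in> R \<longleftrightarrow> j \<le> s" if j: "j \<in> {1..card X}" for j
  proof -
    have "del X j \<in> R \<longleftrightarrow> del X j \<in> Pset X \<inter> R"
      using j unfolding Pset_def facets_eq_image by blast
    also have "\<dots> \<longleftrightarrow> j \<in> {1..s}"
      unfolding s(2) using inj_on_image_mem_iff[OF inj_on_del[OF assms(1)] j] s(1) by simp
    finally show ?thesis using j by simp
  qed
  then show ?thesis using that by blast
qed

lemma consistent_imp_consistent_on:
  assumes "consistent n k w R"
  shows "consistent_on {1..n} k (inv w) R"
  unfolding consistent_on_def
proof (intro conjI ballI)
  show "R \<subseteq> Inv_on {1..n} (k + 1) (inv w)"
    using assms by (simp add: consistent_def Inv_eq_Inv_on)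
next
  fix YZ assume YZ: "YZ \<in> qrel_on {1..n} (k + 1) (inv w)"
  obtain Y Z where YZ_eq: "YZ = (Y, Z)" by fastforce
  have "Pleq n (k + 1) w Y Z"
    using qrel_on_Inv_on[OF YZ[unfolded YZ_eq]]  YZ[unfolded YZ_eq]
    by (simp add: Pleq_def qrel_eq_qrel_on Inv_eq_Inv_on)
  then show "case YZ of (Y, Z) \<Rightarrow> Z \<in> R \<longrightarrow> Y \<in> R"
    using assms unfolding YZ_eq consistent_def by blast
next
  fix X assume X: "X \<in> Inv_on {1..n} (k + 2) (inv w)"
  then have fin: "finite X" and card: "card X = k + 2"
    by (auto simp: Inv_on_def intro: finite_subset)
  have "is_prefix X (Pset X \<inter> R) \<or> is_suffix X (Pset X \<inter> R)"
    using assms X by (simp add: consistent_def Inv_eq_Inv_on)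
  then show "mono_on {1..k + 2} (\<lambda>j. del X j \<in> R) \<or> antimono_on {1..k + 2} (\<lambda>j. del X j \<in> R)"
  proof
    assume "is_prefix X (Pset X \<inter> R)"
    then obtain s where "\<And>j. j \<in> {1..k + 2} \<Longrightarrow> del X j \<in> R \<longleftrightarrow> s \<le> j"
      using facet_in_prefix_iff[OF fin] card by metis
    then have "mono_on {1..k + 2} (\<lambda>j. del X j \<in> R)"
      by (intro monotone_onI) auto
    then show ?thesis ..
  next
    assume "is_suffix X (Pset X \<inter> R)"
    then obtain s where "\<And>j. j \<in> {1..k + 2} \<Longrightarrow> del X j \<in> R \<longleftrightarrow> j \<le> s"
      using facet_in_suffix_iff[OF fin] card by metis
    then have "antimono_on {1..k + 2} (\<lambda>j. del X j \<in> R)"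
      by (intro monotone_onI) auto
    then show ?thesis ..
  qed
qed

lemma GR_edges_eq_GR_edges_on: "GR_edges n k w R = GR_edges_on {1..n} k (inv w) R"
proof -
  have "{(Y, Z). Pleq n k w Y Z \<and> (Y, Z) \<in> qrel n k w} = qrel_on {1..n} k (inv w)"
    using qrel_on_Inv_on[of _ _ "{1..n}" k "inv w"]
    by (auto simp: Pleq_def qrel_eq_qrel_on Inv_eq_Inv_on)
  then show ?thesis
    unfolding GR_edges_def GR_edges_on_def Inv_eq_Inv_on by simp
qed

section \<open>Acyclicity criteria\<close>

lemma acyclic_layered:
  fixes L :: "'a \<Rightarrow> nat"
  assumes "\<And>x y. (x, y) \<in> E \<Longrightarrow> L x \<le> L y"
    and "\<And>l. acyclic {(x, y) \<in> E. L x = l \<and> L y = l}"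
  shows "acyclic E"
proof (rule acyclicI, intro allI notI)
  fix x assume "(x, x) \<in> E\<^sup>+"
  have "L a \<le> L b \<and> (L a = L b \<longrightarrow> (a, b) \<in> {(x, y) \<in> E. L x = L a \<and> L y = L a}\<^sup>+)"
    if "(a, b) \<in> E\<^sup>+" for a b
    using that
  proof (induction rule: trancl_induct)
    case (base b)
    then show ?case using assms(1) by auto
  next
    case (step b c)
    then show ?case using assms(1)[OF step.hyps(2)] by (auto intro: trancl_into_trancl)
  qed
  then have "(x, x) \<in> {(a, b) \<in> E. L a = L x \<and> L b = L x}\<^sup>+"
    using \<open>(x, x) \<in> E\<^sup>+\<close> by blast
  then show False using assms(2) unfolding acyclic_def by blast
qed

lemma acyclic_hom:
  assumes "acyclic E'" "\<And>x y. (x, y) \<in> E \<Longrightarrow> (f x, f y) \<in> E'"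
  shows "acyclic E"
proof -
  have "(f x, f y) \<in> E'\<^sup>+" if "(x, y) \<in> E\<^sup>+" for x y
    using that by induction (auto intro: assms(2) trancl_into_trancl)
  then show ?thesis using assms(1) unfolding acyclic_def by blast
qed

section \<open>Splitting off the least vertex\<close>

locale split_at_min =
  fixes V :: "nat set" and v :: nat and p :: "nat \<Rightarrow> nat" and k :: nat and R :: "nat set set"
  assumes finite_V: "finite V" and v_mem: "v \<in> V" and v_min: "\<And>x. x \<in> V \<Longrightarrow> v \<le> x"
    and consistent: "consistent_on V k p R" and k_pos: "1 \<le> k"
begin

abbreviation extendable :: "nat set \<Rightarrow> bool" where
  "extendable Y \<equiv> \<forall>y\<in>Y. p y < p v"

(* For Y avoiding v, insert v Y is an inversion iff Y is extendable. If it is not, the edges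
   between Y and the facets through v come from quasi-inversions at position 1, oriented by the
   parity of k - 1. *)
definition early :: "nat set \<Rightarrow> bool" where
  "early Y \<longleftrightarrow> (if extendable Y then insert v Y \<in> R else even k)"

lemma R_Inv_on: "R \<subseteq> Inv_on V (k + 1) p"
  using consistent by (simp add: consistent_on_def)

lemma R_closed: "(Y, Z) \<in> qrel_on V (k + 1) p \<Longrightarrow> Z \<in> R \<Longrightarrow> Y \<in> R"
  using consistent by (auto simp: consistent_on_def)

lemma v_in_del_iff:
  assumes "X \<subseteq> V" "card X = k + 1" "v \<in> X" "1 \<le> j" "j \<le> k + 1"
  shows "v \<in> del X j \<longleftrightarrow> j \<noteq> 1"
  using least_in_del_iff[of X v j] assms v_min card_Suc_finite[of X k] by auto

lemma del_1_eq:
  assumes "X \<subseteq> V" "card X = k + 1" "v \<in> X"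
  shows "del X 1 = X - {v}"
  using elt_1_eq_least[of X v] assms v_min card_Suc_finite[of X k] by (auto simp: del_def)

lemma v_less: "x \<in> V \<Longrightarrow> x \<noteq> v \<Longrightarrow> v < x"
  using v_min le_neq_implies_less by blast

lemma inverted_with_v:
  "X \<subseteq> V \<Longrightarrow> v \<in> X \<Longrightarrow> inverted p X \<Longrightarrow> \<forall>x\<in>X - {v}. v < x \<and> p x < p v"
  using v_less by blast

lemma quasi_at_1_not_extendable:
  assumes "X \<subseteq> V" "card X = k + 1" "v \<in> X" "quasi_at p X 1"
  shows "\<not> extendable (del X 1)"
proof
  assume below: "extendable (del X 1)"
  have del_1: "del X 1 = X - {v}" using del_1_eq[OF assms(1-3)] .
  have "inverted p (del X 1)" using assms(4) by (simp add: quasi_at_def)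
  moreover have "\<forall>y\<in>del X 1. v < y" using del_1 assms(1) v_less by blast
  ultimately have "inverted p (insert v (del X 1))"
    using below inverted_insert_min[of "del X 1" v p] by simp
  moreover have "insert v (del X 1) = X" using del_1 assms(3) by blast
  ultimately have "inverted p X" by metis
  then show False
    using quasi_at_not_inverted[OF assms(4)] assms(2) card_Suc_finite[of X k] k_pos by simp
qed

lemma early_if_edge_into_v:
  assumes "(Y, Z) \<in> GR_edges_on V k p R" "v \<notin> Y" "v \<in> Z"
  shows "early Y"
  using assms(1)
proof (cases rule: GR_edges_onE)
  case (in_R X i)
  then have X: "X \<subseteq> V" "card X = k + 1" "inverted p X" using R_Inv_on by (auto simp: Inv_on_def)
  have "v \<in> X" using assms(3) in_R del_subset by blast
  then have "Y = X - {v}"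
    using v_in_del_iff[OF X(1,2)] del_1_eq[OF X(1,2)] in_R assms(2) by auto
  then have "insert v Y = X" "\<forall>y\<in>Y. p y < p v"
    using \<open>v \<in> X\<close> inverted_with_v[OF X(1) \<open>v \<in> X\<close> X(3)] by auto
  then show ?thesis using in_R(1) by (simp add: early_def)
next
  case (not_in_R X i)
  then have "v \<in> del X (i + 1)"
    using assms(3) del_subset v_in_del_iff[of X "i + 1"] by (auto simp: Inv_on_def)
  then show ?thesis using not_in_R assms(2) by simp
next
  case (quasi X i)
  have "v \<in> X" using assms(3) quasi_edge_cases[OF quasi(6)[symmetric]] del_subset by blast
  then have "Y = del X 1" "i = 1" "odd (k - 1)"
    using quasi v_in_del_iff[OF quasi(1,2)] assms(2) by (auto simp: quasi_edge_def split: if_splits)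
  then show ?thesis
    using quasi_at_1_not_extendable[OF quasi(1,2) \<open>v \<in> X\<close>] quasi(5) k_pos
    by (auto simp: early_def)
qed

lemma not_early_if_edge_from_v:
  assumes "(Z, Y) \<in> GR_edges_on V k p R" "v \<in> Z" "v \<notin> Y"
  shows "\<not> early Y"
  using assms(1)
proof (cases rule: GR_edges_onE)
  case (in_R X i)
  then have "X \<subseteq> V" "card X = k + 1" using R_Inv_on by (auto simp: Inv_on_def)
  moreover have "v \<in> X" using assms(2) in_R del_subset by blast
  ultimately have "v \<in> del X (i + 1)" using v_in_del_iff[of X "i + 1"] in_R(2,3) by simp
  then show ?thesis using in_R assms(3) by simp
next
  case (not_in_R X i)
  then have X: "X \<subseteq> V" "card X = k + 1" "inverted p X" by (auto simp: Inv_on_def)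
  have "v \<in> X" using assms(2) not_in_R del_subset by blast
  then have "Y = X - {v}"
    using v_in_del_iff[OF X(1,2)] del_1_eq[OF X(1,2)] not_in_R assms(3) by auto
  then have "insert v Y = X" "\<forall>y\<in>Y. p y < p v"
    using \<open>v \<in> X\<close> inverted_with_v[OF X(1) \<open>v \<in> X\<close> X(3)] by auto
  then show ?thesis using not_in_R(2) by (simp add: early_def)
next
  case (quasi X i)
  have "v \<in> X" using assms(2) quasi_edge_cases[OF quasi(6)[symmetric]] del_subset by blast
  then have "Y = del X 1" "i = 1" "even (k - 1)"
    using quasi v_in_del_iff[OF quasi(1,2)] assms(3) by (auto simp: quasi_edge_def split: if_splits)
  then show ?thesis
    using quasi_at_1_not_extendable[OF quasi(1,2) \<open>v \<in> X\<close>] quasi(5) k_pos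
    by (auto simp: early_def)
qed

lemma insert_v_Inv_on:
  assumes "X \<in> Inv_on V (k + 1) p" "v \<notin> X" "extendable X"
  shows "insert v X \<in> Inv_on V (k + 2) p" and "del (insert v X) 1 = X"
    and "\<And>j. 1 \<le> j \<Longrightarrow> j \<le> k + 1 \<Longrightarrow> del (insert v X) (j + 1) = insert v (del X j)"
proof -
  have X: "X \<subseteq> V" "card X = k + 1" "inverted p X" and fin: "finite X"
    using assms(1) card_Suc_finite[of X k] by (auto simp: Inv_on_def)
  have above: "\<forall>x\<in>X. v < x" using X(1) assms(2) v_less by blast
  show "insert v X \<in> Inv_on V (k + 2) p"
    using X fin assms(2,3) above v_mem inverted_insert_min[OF above, of p] by (simp add: Inv_on_def)
  show "del (insert v X) 1 = X" using del_insert_min(1)[OF fin above] .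
  show "del (insert v X) (j + 1) = insert v (del X j)" if "1 \<le> j" "j \<le> k + 1" for j
    using del_insert_min(2)[OF fin above that(1)] that(2) X(2) by simp
qed

lemma early_backward_in_R:
  assumes "X \<in> R" "1 \<le> i" "i \<le> k" "v \<notin> X" "early (del X (i + 1))"
  shows "early (del X i)"
proof -
  have XI: "X \<in> Inv_on V (k + 1) p" using assms(1) R_Inv_on by blast
  then have X: "X \<subseteq> V" "card X = k + 1" "inverted p X" and fin: "finite X"
    using card_Suc_finite[of X k] by (auto simp: Inv_on_def)
  show ?thesis
  proof (cases "extendable (del X (i + 1))")
    case True
    then have "extendable X" using inverted_facet_bound[OF fin X(3) assms(2)] X(2) assms(3) by simp
    note Xv = insert_v_Inv_on[OF XI assms(4) this]
    have "insert v (del X (i + 1)) \<in> R" using True assms(5) by (simp add: early_def)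
    then have "insert v (del X i) \<in> R"
      using consistent_on_facet_step(1)[OF consistent Xv(1), of "i + 1"] Xv(2,3) assms(1-3) by simp
    then show ?thesis using \<open>extendable X\<close> del_subset[of X i] by (auto simp: early_def)
  next
    case False
    then have "even k" using assms(5) by (simp add: early_def)
    show ?thesis
    proof (cases "extendable (del X i)")
      case True
      with False have "\<not> p (elt X i) < p v" by (auto simp: del_def)
      then have "i = 1" using inverted_facet_bound_1[OF fin X(3) assms(2) _ True] X(2) assms(3)
        by simp
      then have "(insert v (del X 1), X) \<in> qrel_on V (k + 1) p"
        using qrel_on_insert_min_1[OF XI v_mem] \<open>even k\<close> True \<open>\<not> p (elt X i) < p v\<close>
          X(1) assms(4) v_less
        by auto
      then have "insert v (del X i) \<in> R" using R_closed assms(1) \<open>i = 1\<close> by blast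
      then show ?thesis using True by (simp add: early_def)
    qed (use \<open>even k\<close> in \<open>auto simp: early_def\<close>)
  qed
qed

lemma early_backward_not_in_R:
  assumes "X \<in> Inv_on V (k + 1) p" "X \<notin> R" "1 \<le> i" "i \<le> k" "v \<notin> X" "early (del X i)"
  shows "early (del X (i + 1))"
proof -
  have X: "X \<subseteq> V" "card X = k + 1" "inverted p X" and fin: "finite X"
    using assms(1) card_Suc_finite[of X k] by (auto simp: Inv_on_def)
  show ?thesis
  proof (cases "extendable (del X i)")
    case True
    then have Zv: "insert v (del X i) \<in> R" using assms(6) by (simp add: early_def)
    show ?thesis
    proof (cases "extendable (del X (i + 1))")
      case Y_ext: True
      then have "extendable X" using inverted_facet_bound[OF fin X(3) assms(3)] X(2) assms(4)
        by simp
      note Xv = insert_v_Inv_on[OF assms(1,5) this]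
      have "insert v (del X (i + 1)) \<in> R"
        using consistent_on_facet_step(2)[OF consistent Xv(1), of "i + 1"] Xv(2,3) assms(2-4) Zv
          by simp
      then show ?thesis using Y_ext by (simp add: early_def)
    next
      case False
      with True have "\<not> p (elt X i) < p v" by (auto simp: del_def)
      then have "i = 1" using inverted_facet_bound_1[OF fin X(3) assms(3) _ True] X(2) assms(4)
        by simp
      have "even k"
      proof (rule ccontr)
        assume "odd k"
        then have "(X, insert v (del X 1)) \<in> qrel_on V (k + 1) p"
          using qrel_on_insert_min_1[OF assms(1) v_mem] True \<open>\<not> p (elt X i) < p v\<close> \<open>i = 1\<close>
            X(1) assms(5) v_less
          by auto
        then show False using R_closed Zv assms(2) \<open>i = 1\<close> by blast
      qed
      then show ?thesis using False by (auto simp: early_def)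
    qed
  next
    case False
    then have "even k" using assms(6) by (simp add: early_def)
    moreover have "\<not> extendable (del X (i + 1))"
      using False inverted_facet_bound[OF fin X(3) assms(3)] X(2) assms(4) del_subset[of X i]
        by auto
    ultimately show ?thesis by (auto simp: early_def)
  qed
qed

lemma quasi_edge_extendable_parity:
  assumes "card X = k + 1" "1 \<le> i" "i \<le> k" "quasi_at p X i" "(Y, Z) = quasi_edge k X i"
  shows "extendable Z \<Longrightarrow> \<not> extendable Y \<Longrightarrow> even k"
    and "extendable Y \<Longrightarrow> \<not> extendable Z \<Longrightarrow> odd k"
proof -
  have fin: "finite X" using assms(1) card_Suc_finite by simp
  note bound = quasi_at_facet_bound[OF fin assms(4,2)]
    and bound_1 = quasi_at_facet_bound_1[OF fin assms(4,2)]
  have orient: "odd (k - i) \<Longrightarrow> Y = del X i \<and> Z = del X (i + 1)"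
    "\<not> odd (k - i) \<Longrightarrow> Y = del X (i + 1) \<and> Z = del X i"
    using assms(5) by (simp_all add: quasi_edge_def)
  have one: "i = 1" if "extendable (del X (i + 1))" "\<not> extendable (del X i)"
  proof -
    have "\<not> p (elt X (i + 1)) < p v" using that by (auto simp: del_def)
    then show ?thesis using bound_1 that(1) assms(1,3) by simp
  qed
  have succ: "extendable (del X (i + 1))" if "extendable (del X i)"
    using bound that del_subset[of X "i + 1"] assms(1,3) by auto
  show "extendable Z \<Longrightarrow> \<not> extendable Y \<Longrightarrow> even k"
  proof (cases "odd (k - i)")
    case True
    then show "extendable Z \<Longrightarrow> \<not> extendable Y \<Longrightarrow> even k"
      using one orient(1) assms(3) by force
  qed (use orient(2) succ in blast)
  show "extendable Y \<Longrightarrow> \<not> extendable Z \<Longrightarrow> odd k"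
  proof (cases "odd (k - i)")
    case False
    then show "extendable Y \<Longrightarrow> \<not> extendable Z \<Longrightarrow> odd k"
      using one orient(2) assms(3) by force
  qed (use orient(1) succ in blast)
qed

lemma early_backward_quasi:
  assumes "X \<subseteq> V" "card X = k + 1" "1 \<le> i" "i \<le> k" "quasi_at p X i"
    and "(Y, Z) = quasi_edge k X i" "v \<notin> X" "early Z"
  shows "early Y"
proof (cases "extendable Z")
  case True
  then have Zv: "insert v Z \<in> R" using assms(8) by (simp add: early_def)
  show ?thesis
  proof (cases "extendable Y")
    case Y_ext: True
    have "Y \<union> Z = X"
      using quasi_edge_cases[OF assms(6)[symmetric]] by (intro facets_Un[OF assms(2-4)])
    then have "\<forall>x\<in>X. v < x \<and> p x < p v" using True Y_ext assms(1,7) v_less by blast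
    then have "(insert v Y, insert v Z) \<in> qrel_on V (k + 1) p"
      using qrel_on_insert_min[OF assms(1) v_mem assms(2-5)] assms(6)[symmetric] by simp
    then show ?thesis using R_closed Zv Y_ext by (simp add: early_def)
  next
    case False
    then show ?thesis
      using quasi_edge_extendable_parity(1)[OF assms(2-6) True] by (auto simp: early_def)
  qed
next
  case False
  then have "even k" using assms(8) by (simp add: early_def)
  then have "\<not> extendable Y" using quasi_edge_extendable_parity(2)[OF assms(2-6) _ False] by blast
  then show ?thesis using \<open>even k\<close> by (auto simp: early_def)
qed

lemma early_backward:
  assumes "(Y, Z) \<in> GR_edges_on V k p R" "v \<notin> Y" "v \<notin> Z" "early Z"
  shows "early Y"
  using assms(1)
proof (cases rule: GR_edges_onE)
  case (in_R X i)
  then have "Y \<union> Z = X" using R_Inv_on by (intro facets_Un[of X k i]) (auto simp: Inv_on_def)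
  then have "v \<notin> X" using assms(2,3) by blast
  then show ?thesis using early_backward_in_R[OF in_R(1-3)] in_R(4,5) assms(4) by simp
next
  case (not_in_R X i)
  then have "Y \<union> Z = X" by (intro facets_Un[of X k i]) (auto simp: Inv_on_def)
  then have "v \<notin> X" using assms(2,3) by blast
  then show ?thesis using early_backward_not_in_R[OF not_in_R(1-4)] not_in_R(5,6) assms(4) by simp
next
  case (quasi X i)
  then have "Y \<union> Z = X"
    using quasi_edge_cases[OF quasi(6)[symmetric]] by (intro facets_Un[of X k i]) auto
  then have "v \<notin> X" using assms(2,3) by blast
  then show ?thesis using early_backward_quasi[OF quasi] assms(4) by simp
qed

definition link :: "nat set" where
  "link = {t \<in> V. v < t \<and> p t < p v}"

definition link_R :: "nat set set" where
  "link_R = {T. v \<notin> T \<and> insert v T \<in> R}"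

lemma link_subset: "link \<subset> V"
  using v_mem by (auto simp: link_def)

lemma insert_v_Inv_on_iff:
  assumes "v \<notin> T"
  shows "insert v T \<in> Inv_on V (m + 1) p \<longleftrightarrow> T \<in> Inv_on link m p"
proof
  assume T: "insert v T \<in> Inv_on V (m + 1) p"
  then have "finite T" using card_Suc_finite[of "insert v T" m] by (simp add: Inv_on_def)
  moreover have "\<forall>t\<in>T. v < t" using T assms v_less by (auto simp: Inv_on_def)
  ultimately show "T \<in> Inv_on link m p"
    using T assms inverted_insert_min[of T v p] by (auto simp: Inv_on_def link_def)
next
  assume T: "T \<in> Inv_on link m p"
  then have "finite T" "\<forall>t\<in>T. v < t \<and> p t < p v" "T \<subseteq> V"
    using finite_subset[OF _ finite_V] link_subset by (auto simp: Inv_on_def link_def)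
  then show "insert v T \<in> Inv_on V (m + 1) p"
    using T assms v_mem inverted_insert_min[of T v p] by (auto simp: Inv_on_def)
qed

lemma qrel_on_link_lift:
  assumes "(Y, Z) \<in> qrel_on link m p"
  shows "(insert v Y, insert v Z) \<in> qrel_on V (m + 1) p"
proof -
  obtain X i where X: "(Y, Z) = quasi_edge m X i" "X \<subseteq> link" "card X = m + 1" "1 \<le> i" "i \<le> m"
    "quasi_at p X i"
    using assms by (auto simp: qrel_on_def)
  have "X \<subseteq> V" "\<forall>x\<in>X. v < x \<and> p x < p v" using X(2) by (auto simp: link_def)
  from qrel_on_insert_min[OF this(1) v_mem X(3-6) this(2)] show ?thesis
    using X(1)[symmetric] by simp
qed

lemma consistent_link: "consistent_on link (k - 1) p link_R"
proof -
  have k: "k - 1 + 1 = k" "k - 1 + 2 = k + 1" using k_pos by simp_all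
  have "link_R \<subseteq> Inv_on link k p"
    using R_Inv_on insert_v_Inv_on_iff[of _ k] by (auto simp: link_R_def)
  moreover have "Y \<in> link_R" if "(Y, Z) \<in> qrel_on link k p" "Z \<in> link_R" for Y Z
  proof -
    have "insert v Y \<in> R" using R_closed[OF qrel_on_link_lift[OF that(1)]] that(2)
      by (simp add: link_R_def)
    moreover have "v \<notin> Y" using qrel_on_Inv_on(1)[OF that(1)] by (auto simp: Inv_on_def link_def)
    ultimately show ?thesis by (simp add: link_R_def)
  qed
  moreover have
    "mono_on {1..k + 1} (\<lambda>j. del X j \<in> link_R) \<or>
      antimono_on {1..k + 1} (\<lambda>j. del X j \<in> link_R)"
    if X: "X \<in> Inv_on link (k + 1) p" for X
  proof -
    have "v \<notin> X" using X by (auto simp: Inv_on_def link_def)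
    then have Xv: "insert v X \<in> Inv_on V (k + 2) p" using X insert_v_Inv_on_iff[of X "k + 1"]
      by simp
    have fin: "finite X" and above: "\<forall>x\<in>X. v < x" and card: "card X = k + 1"
      using X card_Suc_finite[of X k] by (auto simp: Inv_on_def link_def)
    have shift: "del X j \<in> link_R \<longleftrightarrow> del (insert v X) (j + 1) \<in> R" if "j \<in> {1..k + 1}" for j
      using del_insert_min(2)[OF fin above, of j] that card \<open>v \<notin> X\<close> del_subset[of X j]
      by (auto simp: link_R_def)
    have "mono_on {1..k + 1 + 1} (\<lambda>j. del (insert v X) j \<in> R) \<or>
        antimono_on {1..k + 1 + 1} (\<lambda>j. del (insert v X) j \<in> R)"
      using consistent Xv by (simp add: consistent_on_def)
    then show ?thesis by (rule mono_or_antimono_on_shift) (use shift in simp)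
  qed
  ultimately show ?thesis unfolding consistent_on_def k by blast
qed

lemma facets_containing_v:
  assumes "X \<subseteq> V" "card X = k + 1" "v \<in> X" "1 \<le> i" "i \<le> k" "v \<in> del X i"
  obtains i' where "i = i' + 1" "1 \<le> i'" "i' < k"
    and "del X i = insert v (del (X - {v}) i')" "del X (i + 1) = insert v (del (X - {v}) (i' + 1))"
proof -
  have fin: "finite (X - {v})" and above: "\<forall>x\<in>X - {v}. v < x" and card: "card (X - {v}) = k"
    and X: "insert v (X - {v}) = X"
    using assms(1-3) card_Suc_finite[of X k] v_less by auto
  have "i \<noteq> 1" using v_in_del_iff[OF assms(1-3)] assms(4-6) by simp
  then obtain i' where i': "i = i' + 1" "1 \<le> i'" "i' < k" using assms(4,5) by (cases i) auto
  moreover have "del X i = insert v (del (X - {v}) i')"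
    "del X (i + 1) = insert v (del (X - {v}) (i' + 1))"
    using del_insert_min(2)[OF fin above, of i'] del_insert_min(2)[OF fin above, of "i' + 1"]
      i' card X
    by simp_all
  ultimately show ?thesis using that by blast
qed

lemma qrel_on_link_contract:
  assumes "X \<subseteq> V" "card X = k + 1" "1 \<le> i" "i \<le> k" "quasi_at p X i"
    and "(Y, Z) = quasi_edge k X i" "v \<in> Y" "v \<in> Z"
  shows "(Y - {v}, Z - {v}) \<in> qrel_on link (k - 1) p"
proof -
  have "v \<in> X" using assms(7) quasi_edge_cases[OF assms(6)[symmetric]] del_subset by blast
  have v_del: "v \<in> del X i" "v \<in> del X (i + 1)"
    using assms(7,8) quasi_edge_cases[OF assms(6)[symmetric]] by auto
  obtain i' where i': "i = i' + 1" "1 \<le> i'" "i' < k"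
    using facets_containing_v[OF assms(1,2) \<open>v \<in> X\<close> assms(3,4) v_del(1)] by metis
  define X' where "X' = X - {v}"
  have fin: "finite X'" and card: "card X' = k - 1 + 1" and X: "insert v X' = X"
    using assms(2) card_Suc_finite[of X k] \<open>v \<in> X\<close> k_pos by (auto simp: X'_def)
  have X'_Un: "X' \<subseteq> del X i \<union> del X (i + 1)"
    using del_Un_del_Suc[of X i] assms(2-4) card_Suc_finite[of X k] by (auto simp: X'_def)
  have below: "\<forall>x\<in>X'. v < x \<and> p x < p v"
  proof
    fix x assume "x \<in> X'"
    then have "v < x" using assms(1) v_less by (auto simp: X'_def)
    moreover have "x \<in> del X i \<or> x \<in> del X (i + 1)" using X'_Un \<open>x \<in> X'\<close> by blast
    ultimately show "v < x \<and> p x < p v" using v_del assms(5) by (auto simp: quasi_at_def)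
  qed
  then have above: "\<forall>x\<in>X'. v < x" by blast
  have "quasi_at p X' i'"
    using quasi_at_insert_min[OF fin below i'(2)] assms(5) X i' card by simp
  moreover have "X' \<subseteq> link" using below assms(1) by (auto simp: X'_def link_def)
  moreover have "i' \<le> k - 1" using i'(3) by simp
  ultimately have "quasi_edge (k - 1) X' i' \<in> qrel_on link (k - 1) p"
    using i'(2) card unfolding qrel_on_def by blast
  moreover obtain Y' Z' where YZ': "quasi_edge (k - 1) X' i' = (Y', Z')"
    by (cases "quasi_edge (k - 1) X' i'")
  moreover have "(Y, Z) = (insert v Y', insert v Z')"
    using quasi_edge_insert_min[OF fin above i'(2), of "k - 1"] assms(6) X i' card k_pos YZ' by simp
  moreover have "v \<notin> Y'" "v \<notin> Z'"
    using quasi_edge_cases[OF YZ'] del_subset[of X'] by (auto simp: X'_def)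
  ultimately show ?thesis by simp
qed

lemma GR_edges_link:
  assumes "(Y, Z) \<in> GR_edges_on V k p R" "v \<in> Y" "v \<in> Z"
  shows "(Y - {v}, Z - {v}) \<in> GR_edges_on link (k - 1) p link_R"
  using assms(1)
proof (cases rule: GR_edges_onE)
  case (in_R X i)
  then have X: "X \<subseteq> V" "card X = k + 1" using R_Inv_on by (auto simp: Inv_on_def)
  have "v \<in> X" using assms(2) in_R(4) del_subset by blast
  obtain i' where i': "i = i' + 1" "1 \<le> i'" "i' < k"
      "Y = insert v (del (X - {v}) i')" "Z = insert v (del (X - {v}) (i' + 1))"
    using facets_containing_v[OF X \<open>v \<in> X\<close> in_R(2,3)] in_R(4,5) assms(2) by metis
  moreover have "v \<notin> del (X - {v}) j" for j using del_subset by blast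
  moreover have "X - {v} \<in> link_R" using in_R(1) \<open>v \<in> X\<close> by (simp add: link_R_def insert_absorb)
  then have "(del (X - {v}) i', del (X - {v}) (i' + 1))
      \<in> {(del X i, del X (i + 1)) | X i. X \<in> link_R \<and> 1 \<le> i \<and> i \<le> k - 1}"
    using i'(2,3) by fastforce
  then have "(del (X - {v}) i', del (X - {v}) (i' + 1)) \<in> GR_edges_on link (k - 1) p link_R"
    unfolding GR_edges_on_def by blast
  ultimately show ?thesis by simp
next
  case (not_in_R X i)
  then have X: "X \<subseteq> V" "card X = k + 1" by (auto simp: Inv_on_def)
  have "v \<in> X" using assms(3) not_in_R(6) del_subset by blast
  obtain i' where i': "i = i' + 1" "1 \<le> i'" "i' < k"
      "Z = insert v (del (X - {v}) i')" "Y = insert v (del (X - {v}) (i' + 1))"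
    using facets_containing_v[OF X \<open>v \<in> X\<close> not_in_R(3,4)] not_in_R(5,6) assms(3) by metis
  moreover have "v \<notin> del (X - {v}) j" for j using del_subset by blast
  moreover have "X - {v} \<in> Inv_on link (k - 1 + 1) p - link_R"
    using not_in_R(1,2) \<open>v \<in> X\<close> insert_v_Inv_on_iff[of "X - {v}" k] k_pos
    by (simp add: link_R_def insert_absorb)
  then have "(del (X - {v}) (i' + 1), del (X - {v}) i') \<in> {(del X (i + 1), del X i) | X i.
      X \<in> Inv_on link (k - 1 + 1) p - link_R \<and> 1 \<le> i \<and> i \<le> k - 1}"
    using i'(2,3) by fastforce
  then have "(del (X - {v}) (i' + 1), del (X - {v}) i') \<in> GR_edges_on link (k - 1) p link_R"
    unfolding GR_edges_on_def by blast
  ultimately show ?thesis by simp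
next
  case (quasi X i)
  then show ?thesis
    using qrel_on_link_contract[OF quasi assms(2,3)] unfolding GR_edges_on_def by blast
qed

definition layer :: "nat set \<Rightarrow> nat" where
  "layer Y = (if v \<in> Y then 1 else if early Y then 0 else 2)"

lemma layer_mono:
  assumes "(Y, Z) \<in> GR_edges_on V k p R"
  shows "layer Y \<le> layer Z"
proof (cases "v \<in> Y"; cases "v \<in> Z")
  assume "v \<in> Y" "v \<notin> Z"
  then show ?thesis using not_early_if_edge_from_v[OF assms] by (simp add: layer_def)
next
  assume "v \<notin> Y" "v \<in> Z"
  then show ?thesis using early_if_edge_into_v[OF assms] by (simp add: layer_def)
next
  assume "v \<notin> Y" "v \<notin> Z"
  then show ?thesis using early_backward[OF assms] by (simp add: layer_def)
qed (simp add: layer_def)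

lemma acyclic_if_acyclic_remove_link:
  assumes acyclic_remove: "acyclic (GR_edges_on (V - {v}) k p {X \<in> R. v \<notin> X})"
    and acyclic_link: "acyclic (GR_edges_on link (k - 1) p link_R)"
  shows "acyclic (GR_edges_on V k p R)"
proof (rule acyclic_layered[where L = layer])
  fix l
  let ?E = "{(Y, Z) \<in> GR_edges_on V k p R. layer Y = l \<and> layer Z = l}"
  have layer_1: "layer Y = 1 \<longleftrightarrow> v \<in> Y" for Y by (simp add: layer_def)
  show "acyclic ?E"
  proof (cases "l = 1")
    case True
    have "(Y - {v}, Z - {v}) \<in> GR_edges_on link (k - 1) p link_R" if "(Y, Z) \<in> ?E" for Y Z
    proof -
      from that True have "(Y, Z) \<in> GR_edges_on V k p R" "v \<in> Y" "v \<in> Z"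
        unfolding layer_1[symmetric] by simp_all
      then show ?thesis by (rule GR_edges_link)
    qed
    then show ?thesis by (intro acyclic_hom[OF acyclic_link, where f = "\<lambda>Y. Y - {v}"]) simp
  next
    case False
    have "(Y, Z) \<in> GR_edges_on (V - {v}) k p {X \<in> R. v \<notin> X}" if "(Y, Z) \<in> ?E" for Y Z
    proof -
      from that False have "(Y, Z) \<in> GR_edges_on V k p R" "v \<notin> Y" "v \<notin> Z"
        unfolding layer_1[symmetric] by auto
      then show ?thesis by (rule GR_edges_on_remove[OF _ R_Inv_on])
    qed
    then have "?E \<subseteq> GR_edges_on (V - {v}) k p {X \<in> R. v \<notin> X}" by (intro subrelI)
    with acyclic_remove show ?thesis by (rule acyclic_subset)
  qed
qed (rule layer_mono)

end

theorem acyclic_GR_edges_on: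
  "finite V \<Longrightarrow> consistent_on V k p R \<Longrightarrow> acyclic (GR_edges_on V k p R)"
proof (induction "card V" arbitrary: V k R rule: less_induct)
  case less
  show ?case
  proof (cases "k = 0 \<or> V = {}")
    case True
    then show ?thesis
      using GR_edges_on_trivial less.prems(2) by (simp add: consistent_on_def acyclic_def)
  next
    case False
    define v where "v = Min V"
    interpret split_at_min V v p k R
      using False less.prems by unfold_locales (auto simp: v_def)
    show ?thesis
    proof (rule acyclic_if_acyclic_remove_link)
      show "acyclic (GR_edges_on (V - {v}) k p {X \<in> R. v \<notin> X})"
        using less.hyps[of "V - {v}"] less.prems consistent_on_remove
          card_Diff1_less[OF finite_V v_mem]
        by simp
      show "acyclic (GR_edges_on link (k - 1) p link_R)"
        using less.hyps[OF psubset_card_mono[OF finite_V link_subset]] consistent_link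
          finite_subset[OF psubset_imp_subset[OF link_subset] finite_V]
        by blast
    qed
  qed
qed

theorem lemma3p11:
  fixes n k :: nat and w :: "nat \<Rightarrow> nat" and R :: "nat set set"
  assumes "1 \<le> n" and "1 \<le> k" and "k \<le> n"
    and "w permutes {1..n}"
    and "consistent n k w R"
  shows "acyclic (GR_edges n k w R)"
  using acyclic_GR_edges_on[OF _ consistent_imp_consistent_on[OF assms(5)]]
  by (simp add: GR_edges_eq_GR_edges_on)

end
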